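(* If $\ell\ge 5$ is divisible by three, then the uniform Tur\'an density of the tight $3$-uniform cycle $C_\ell^{(3)}$ is equal to zero.
   Context: For $\ell\ge 5$, the tight $3$-uniform cycle $C_\ell^{(3)}$ is the $3$-uniform hypergraph with $\ell$ vertices $v_1,\ldots,v_\ell$ whose edges are exactly the triples $\{v_i,v_{i+1},v_{i+2}\}$, $i\in[\ell]$, indices modulo $\ell$. For an $n$-vertex $3$-uniform hypergraph $H$ and $\varepsilon>0$, the $\varepsilon$-linear density of $H$ is the minimum edge density of an induced subhypergraph of $H$ with at least $\varepsilon n$ vertices. The uniform Tur\'an density of a $3$-uniform hypergraph $F$ is the supremum of all $d\in[0,1]$ such that for every $\varepsilon>0$ there exist arbitrarily large $F$-free $3$-uniform hypergraphs with $\varepsilon$-linear density at least $d$. *)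

theory Defs
  imports Main Complex_Main
begin

definition uniform3 :: "nat set \<Rightarrow> nat set set \<Rightarrow> bool" where
  "uniform3 V E \<longleftrightarrow> finite V \<and> (\<forall>e\<in>E. e \<subseteq> V \<and> card e = 3)"

definition tight_cycle_edges :: "nat \<Rightarrow> nat set set" where
  "tight_cycle_edges l = {{i, (i + 1) mod l, (i + 2) mod l} | i. i < l}"

definition contains_copy :: "nat set \<Rightarrow> nat set set \<Rightarrow> nat set \<Rightarrow> nat set set \<Rightarrow> bool" where
  "contains_copy VH EH VF EF \<longleftrightarrow>
     (\<exists>f. inj_on f VF \<and> f ` VF \<subseteq> VH \<and> (\<forall>e\<in>EF. f ` e \<in> EH))"

definition edge_density :: "nat set set \<Rightarrow> nat set \<Rightarrow> real" where
  "edge_density E S = real (card {e\<in>E. e \<subseteq> S}) / real (card S choose 3)"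

definition linear_density_ge :: "real \<Rightarrow> nat set \<Rightarrow> nat set set \<Rightarrow> real \<Rightarrow> bool" where
  "linear_density_ge \<epsilon> V E d \<longleftrightarrow>
     (\<forall>S. S \<subseteq> V \<and> real (card S) \<ge> \<epsilon> * real (card V) \<longrightarrow> edge_density E S \<ge> d)"

definition uniform_turan_density :: "nat set \<Rightarrow> nat set set \<Rightarrow> real" where
  "uniform_turan_density VF EF = Sup {d. 0 \<le> d \<and> d \<le> 1 \<and>
     (\<forall>\<epsilon>>0. \<forall>N. \<exists>n\<ge>N. \<exists>E. uniform3 {..<n} E \<and> \<not> contains_copy {..<n} E VF EF
        \<and> linear_density_ge \<epsilon> {..<n} E d)}"

end

(*
  If 3 divides l, the tight cycle C_l is a subhypergraph of the complete 3-partite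
  3-graph K(k,k,k), k = l/3: send vertex i of the cycle to the (i div 3)-th vertex of
  class i mod 3. By Erdos' argument K(k,k,k) has Turan density zero: applying the power
  mean inequality once per class, a 3-graph with n vertices and edge density d contains at
  least (d/27)^(k^3) n^(3k) maps of K(k,k,k) sending edges to edges, while at most
  3 k^2 n^(3k-1) of these maps are not injective on a class. Finally, with epsilon = 1 the
  linear density condition already bounds the density of the whole hypergraph from below,
  so Turan density zero implies uniform Turan density zero.
*)

theory Submission
  imports Defs "HOL-Analysis.Convex"
begin

lemma power_of_mean_le_mean_of_power:
  fixes y :: "'i \<Rightarrow> real"
  assumes "finite I" "I \<noteq> {}" "\<And>i. i \<in> I \<Longrightarrow> 0 \<le> y i"
  shows "((\<Sum>i\<in>I. y i) / card I) ^ k \<le> (\<Sum>i\<in>I. y i ^ k) / card I"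
proof -
  have "convex_on {0..} (\<lambda>x::real. x ^ k)"
    using convex_power_odd[of k] convex_on_subset[OF convex_power_even[of k]]
    by (cases "even k") auto
  then have "(\<Sum>i\<in>I. (1 / card I) *\<^sub>R y i) ^ k \<le> (\<Sum>i\<in>I. (1 / card I) * y i ^ k)"
    using assms by (intro convex_on_sum) auto
  then show ?thesis
    by (simp add: sum_divide_distrib)
qed

lemma power_le_power_add_diff:
  fixes a b :: nat
  assumes "b \<le> a"
  shows "a ^ k \<le> b ^ k + k * (a - b) * a ^ (k - 1)"
proof (induction k)
  case 0
  then show ?case by simp
next
  case (Suc k)
  have "a ^ Suc k \<le> a * (b ^ k + k * (a - b) * a ^ (k - 1))"
    using Suc.IH by simp
  also have "\<dots> = a * b ^ k + k * (a - b) * a ^ k"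
    by (cases k) (simp_all add: algebra_simps)
  also have "a * b ^ k \<le> b ^ Suc k + (a - b) * a ^ k"
  proof -
    have "a * b ^ k = b ^ Suc k + (a - b) * b ^ k"
      using assms by (simp add: algebra_simps)
    then show ?thesis
      using assms by (simp add: power_mono)
  qed
  finally show ?case
    by (simp add: add_mult_distrib add.assoc)
qed

definition tuples :: "nat \<Rightarrow> 'a set \<Rightarrow> 'a list set" where
  "tuples k A = {xs. set xs \<subseteq> A \<and> length xs = k}"

lemma finite_tuples: "finite A \<Longrightarrow> finite (tuples k A)"
  unfolding tuples_def by (rule finite_lists_length_eq)

lemma card_tuples: "finite A \<Longrightarrow> card (tuples k A) = card A ^ k"
  unfolding tuples_def by (rule card_lists_length_eq)

lemma card_distinct_tuples_ge:
  assumes "finite V" "k \<le> card V"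
  shows "(card V - k) ^ k \<le> card {xs \<in> tuples k V. distinct xs}"
proof -
  let ?n = "card V"
  have "{xs \<in> tuples k V. distinct xs} = {xs. length xs = k \<and> distinct xs \<and> set xs \<subseteq> V}"
    by (auto simp: tuples_def)
  then have "card {xs \<in> tuples k V. distinct xs} = \<Prod>{?n - k + 1 .. ?n}"
    using assms by (simp add: card_lists_distinct_length_eq)
  moreover have "(?n - k) ^ k = (\<Prod>i\<in>{?n - k + 1 .. ?n}. ?n - k)"
    using assms(2) by simp
  moreover have "\<dots> \<le> \<Prod>{?n - k + 1 .. ?n}"
    by (intro prod_mono) auto
  ultimately show ?thesis
    by simp
qed

lemma card_nondistinct_tuples_le:
  assumes "finite V"
  shows "card V * card {xs \<in> tuples k V. \<not> distinct xs} \<le> k\<^sup>2 * card V ^ k"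
proof (cases "k \<le> card V")
  case True
  let ?n = "card V"
  have "?n ^ k \<le> card {xs \<in> tuples k V. distinct xs} + k\<^sup>2 * ?n ^ (k - 1)"
    using power_le_power_add_diff[of "?n - k" ?n k] card_distinct_tuples_ge[OF assms True] True
    by (simp add: power2_eq_square mult.assoc)
  moreover have "{xs \<in> tuples k V. \<not> distinct xs} = tuples k V - {xs \<in> tuples k V. distinct xs}"
    by auto
  then have "card {xs \<in> tuples k V. \<not> distinct xs} = ?n ^ k - card {xs \<in> tuples k V. distinct xs}"
    using assms by (simp add: card_Diff_subset finite_tuples card_tuples)
  ultimately have "card {xs \<in> tuples k V. \<not> distinct xs} \<le> k\<^sup>2 * ?n ^ (k - 1)"
    by linarith
  then have "?n * card {xs \<in> tuples k V. \<not> distinct xs} \<le> k\<^sup>2 * (?n * ?n ^ (k - 1))"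
    by (simp add: algebra_simps)
  also have "k\<^sup>2 * (?n * ?n ^ (k - 1)) = k\<^sup>2 * ?n ^ k"
    by (cases k) simp_all
  finally show ?thesis .
next
  case False
  have "card {xs \<in> tuples k V. \<not> distinct xs} \<le> card V ^ k"
    using card_mono[OF finite_tuples[OF assms], of "{xs \<in> tuples k V. \<not> distinct xs}"]
    by (auto simp: card_tuples[OF assms])
  moreover have "card V \<le> k\<^sup>2"
    using False le_square[of k] unfolding power2_eq_square by linarith
  ultimately show ?thesis
    by (metis mult_le_mono)
qed

definition complete_on :: "'a set set \<Rightarrow> 'a set \<Rightarrow> 'a set \<Rightarrow> 'a set \<Rightarrow> bool" where
  "complete_on E X Y Z \<longleftrightarrow> (\<forall>x\<in>X. \<forall>y\<in>Y. \<forall>z\<in>Z. {x, y, z} \<in> E)"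

lemma complete_on_rotate: "complete_on E X Y Z \<longleftrightarrow> complete_on E Y Z X"
proof -
  have "{x, y, z} = {y, z, x}" for x y z :: 'a
    by auto
  then show ?thesis
    unfolding complete_on_def by metis
qed

lemma tuples_link_iff:
  "zs \<in> tuples c {z \<in> V. complete_on E X Y {z}} \<longleftrightarrow> zs \<in> tuples c V \<and> complete_on E X Y (set zs)"
  unfolding tuples_def complete_on_def by auto

text \<open>A triple of tuples of lengths a, b, c with entries in V is a map from the vertex set of
the complete 3-partite 3-graph K(a, b, c) to V; it is a homomorphism into (V, E) exactly when
it is complete.\<close>
definition tripartite_homs :: "'a set set \<Rightarrow> 'a set \<Rightarrow> nat \<Rightarrow> nat \<Rightarrow> nat \<Rightarrow> ('a list \<times> 'a list \<times> 'a list) set" where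
  "tripartite_homs E V a b c =
     {(xs, ys, zs) \<in> tuples a V \<times> tuples b V \<times> tuples c V. complete_on E (set xs) (set ys) (set zs)}"

definition tripartite_hom_density :: "'a set set \<Rightarrow> 'a set \<Rightarrow> nat \<Rightarrow> nat \<Rightarrow> nat \<Rightarrow> real" where
  "tripartite_hom_density E V a b c = card (tripartite_homs E V a b c) / card V ^ (a + b + c)"

lemma finite_tripartite_homs: "finite V \<Longrightarrow> finite (tripartite_homs E V a b c)"
  unfolding tripartite_homs_def
  by (rule finite_subset[of _ "tuples a V \<times> tuples b V \<times> tuples c V"]) (auto simp: finite_tuples)

lemma tripartite_hom_density_nonneg: "0 \<le> tripartite_hom_density E V a b c"
  unfolding tripartite_hom_density_def by simp

lemma card_tripartite_homs_rotate:
  "card (tripartite_homs E V a b c) = card (tripartite_homs E V b c a)"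
proof (rule bij_betw_same_card)
  show "bij_betw (\<lambda>(xs, ys, zs). (ys, zs, xs)) (tripartite_homs E V a b c) (tripartite_homs E V b c a)"
  proof (rule bij_betwI[where g = "\<lambda>(ys, zs, xs). (xs, ys, zs)"])
    have "(xs, ys, zs) \<in> tripartite_homs E V a b c \<longleftrightarrow> (ys, zs, xs) \<in> tripartite_homs E V b c a"
      for xs ys zs
      using complete_on_rotate[of E "set xs" "set ys" "set zs"] by (auto simp: tripartite_homs_def)
    then show "(\<lambda>(xs, ys, zs). (ys, zs, xs)) \<in> tripartite_homs E V a b c \<rightarrow> tripartite_homs E V b c a"
      and "(\<lambda>(ys, zs, xs). (xs, ys, zs)) \<in> tripartite_homs E V b c a \<rightarrow> tripartite_homs E V a b c"
      by auto
  qed auto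
qed

lemma tripartite_hom_density_rotate:
  "tripartite_hom_density E V a b c = tripartite_hom_density E V b c a"
  unfolding tripartite_hom_density_def card_tripartite_homs_rotate[of E V a b c]
  by (simp add: ac_simps)

lemma card_tripartite_homs_eq_sum:
  assumes "finite V"
  shows "card (tripartite_homs E V a b c) =
    (\<Sum>p \<in> tuples a V \<times> tuples b V. card {z \<in> V. complete_on E (set (fst p)) (set (snd p)) {z}} ^ c)"
proof -
  define link where "link p = {z \<in> V. complete_on E (set (fst p)) (set (snd p)) {z}}" for p
  have "tripartite_homs E V a b c =
      (\<lambda>((xs, ys), zs). (xs, ys, zs)) ` (SIGMA p : tuples a V \<times> tuples b V. tuples c (link p))"
    by (auto simp: tripartite_homs_def link_def tuples_link_iff image_iff)
  moreover have "inj_on (\<lambda>((xs, ys), zs). (xs, ys, zs)) A" for A :: "(('a list \<times> 'a list) \<times> 'a list) set"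
    by (auto simp: inj_on_def)
  ultimately have "card (tripartite_homs E V a b c) = card (SIGMA p : tuples a V \<times> tuples b V. tuples c (link p))"
    by (simp add: card_image)
  also have "\<dots> = (\<Sum>p \<in> tuples a V \<times> tuples b V. card (link p) ^ c)"
    using assms by (simp add: finite_tuples card_tuples link_def)
  finally show ?thesis
    by (simp add: link_def)
qed

lemma tripartite_hom_density_eq_mean:
  assumes "finite V"
  shows "tripartite_hom_density E V a b c =
    (\<Sum>p \<in> tuples a V \<times> tuples b V.
        (card {z \<in> V. complete_on E (set (fst p)) (set (snd p)) {z}} / card V) ^ c)
      / card (tuples a V \<times> tuples b V)"
  using assms
  by (simp add: tripartite_hom_density_def card_tripartite_homs_eq_sum card_cartesian_product
      card_tuples power_add power_divide sum_divide_distrib[symmetric] mult_ac)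

lemma tripartite_hom_density_power_le:
  assumes "finite V" "V \<noteq> {}"
  shows "tripartite_hom_density E V a b 1 ^ c \<le> tripartite_hom_density E V a b c"
proof -
  obtain v where "v \<in> V"
    using assms(2) by blast
  then have "(replicate a v, replicate b v) \<in> tuples a V \<times> tuples b V"
    by (auto simp: tuples_def)
  then show ?thesis
    unfolding tripartite_hom_density_eq_mean[OF assms(1)] power_one_right
    using assms(1) by (intro power_of_mean_le_mean_of_power) (auto simp: finite_tuples)
qed

text \<open>Erdos' argument: each power mean step blows up the last part, and rotating the parts
lets the three steps blow up each part in turn.\<close>
lemma tripartite_hom_density_ge_power:
  assumes "finite V" "V \<noteq> {}"
  shows "tripartite_hom_density E V 1 1 1 ^ (k ^ 3) \<le> tripartite_hom_density E V k k k"
proof -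
  let ?t = "tripartite_hom_density E V"
  have rotate_twice: "?t a b c = ?t c a b" for a b c
    using tripartite_hom_density_rotate by metis
  have "?t 1 1 1 ^ k \<le> ?t k 1 1"
    using tripartite_hom_density_power_le[OF assms, of E 1 1 k] rotate_twice[of 1 1 k] by simp
  moreover have "?t k 1 1 ^ k \<le> ?t k k 1"
    using tripartite_hom_density_power_le[OF assms, of E k 1 k] rotate_twice[of k 1 k] by simp
  moreover have "?t k k 1 ^ k \<le> ?t k k k"
    using tripartite_hom_density_power_le[OF assms, of E k k k] by simp
  ultimately have "((?t 1 1 1 ^ k) ^ k) ^ k \<le> ?t k k k"
    by (meson order_trans power_mono zero_le_power tripartite_hom_density_nonneg)
  then show ?thesis
    by (simp add: power_mult[symmetric] power3_eq_cube mult.assoc)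
qed

lemma card_le_card_tripartite_homs:
  assumes "uniform3 V E"
  shows "card E \<le> card (tripartite_homs E V 1 1 1)"
proof (rule surj_card_le)
  show "finite (tripartite_homs E V 1 1 1)"
    using assms by (simp add: uniform3_def finite_tripartite_homs)
  show "E \<subseteq> (\<lambda>(xs, ys, zs). set xs \<union> set ys \<union> set zs) ` tripartite_homs E V 1 1 1"
  proof
    fix e
    assume "e \<in> E"
    moreover from this obtain x y z where "e = {x, y, z}" "x \<in> V" "y \<in> V" "z \<in> V"
      using assms unfolding uniform3_def by (metis card_3_iff insert_subset)
    ultimately have "([x], [y], [z]) \<in> tripartite_homs E V 1 1 1"
      by (simp add: tripartite_homs_def tuples_def complete_on_def)
    then show "e \<in> (\<lambda>(xs, ys, zs). set xs \<union> set ys \<union> set zs) ` tripartite_homs E V 1 1 1"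
      using \<open>e = {x, y, z}\<close> by (force intro: rev_image_eqI)
  qed
qed

lemma edge_density_le_tripartite_hom_density:
  assumes "uniform3 V E" "3 \<le> card V"
  shows "edge_density E V \<le> 27 * tripartite_hom_density E V 1 1 1"
proof -
  have "{e \<in> E. e \<subseteq> V} = E"
    using assms(1) by (auto simp: uniform3_def)
  then have "edge_density E V = card E / (card V choose 3)"
    by (simp add: edge_density_def)
  also have "\<dots> \<le> card E / (card V / 3) ^ 3"
    using assms(2) binomial_ge_n_over_k_pow_k[of 3 "card V"]
    by (intro divide_left_mono) auto
  also have "\<dots> \<le> card (tripartite_homs E V 1 1 1) / (card V / 3) ^ 3"
    using card_le_card_tripartite_homs[OF assms(1)] by (intro divide_right_mono) auto
  also have "\<dots> = 27 * tripartite_hom_density E V 1 1 1"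
    by (simp add: tripartite_hom_density_def power_divide power3_eq_cube mult_ac)
  finally show ?thesis .
qed

lemma exists_distinct_complete_tuples:
  assumes "finite V" "3 * real k ^ 2 < card V * tripartite_hom_density E V k k k"
  shows "\<exists>xs \<in> tuples k V. \<exists>ys \<in> tuples k V. \<exists>zs \<in> tuples k V.
    distinct xs \<and> distinct ys \<and> distinct zs \<and> complete_on E (set xs) (set ys) (set zs)"
proof (rule ccontr)
  assume no_distinct: "\<not> ?thesis"
  define n where "n = card V"
  define L where "L = tuples k V"
  define B where "B = {xs \<in> tuples k V. \<not> distinct xs}"
  have "finite L" "finite B"
    using assms(1) by (simp_all add: L_def B_def finite_tuples)
  have "tripartite_homs E V k k k \<subseteq> B \<times> L \<times> L \<union> L \<times> B \<times> L \<union> L \<times> L \<times> B"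
    using no_distinct by (auto simp: tripartite_homs_def B_def L_def)
  then have "card (tripartite_homs E V k k k) \<le> card (B \<times> L \<times> L \<union> L \<times> B \<times> L \<union> L \<times> L \<times> B)"
    using \<open>finite L\<close> \<open>finite B\<close> by (intro card_mono) auto
  also have "\<dots> \<le> 3 * (card B * n ^ k * n ^ k)"
    using card_Un_le[of "B \<times> L \<times> L \<union> L \<times> B \<times> L" "L \<times> L \<times> B"]
      card_Un_le[of "B \<times> L \<times> L" "L \<times> B \<times> L"] assms(1)
    by (simp add: card_cartesian_product L_def n_def card_tuples mult_ac)
  finally have "n * card (tripartite_homs E V k k k) \<le> 3 * (n * card B) * n ^ k * n ^ k"
    by (simp add: algebra_simps)
  also have "\<dots> \<le> 3 * (k\<^sup>2 * n ^ k) * n ^ k * n ^ k"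
    using card_nondistinct_tuples_le[OF assms(1), of k] by (simp add: B_def n_def)
  finally have "n * card (tripartite_homs E V k k k) \<le> 3 * k\<^sup>2 * n ^ (k + k + k)"
    by (simp add: power_add mult_ac)
  then have "real (n * card (tripartite_homs E V k k k)) \<le> real (3 * k\<^sup>2 * n ^ (k + k + k))"
    by (rule of_nat_mono)
  then have "real n * tripartite_hom_density E V k k k \<le> 3 * real k ^ 2"
    by (cases "n = 0") (simp_all add: tripartite_hom_density_def n_def field_simps)
  then show False
    using assms(2) by (simp add: n_def)
qed

definition cyclic_part :: "'a list \<Rightarrow> 'a list \<Rightarrow> 'a list \<Rightarrow> nat \<Rightarrow> 'a list" where
  "cyclic_part xs ys zs i = [xs, ys, zs] ! (i mod 3)"

lemma cyclic_part_mod_eq: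
  "i mod 3 = j mod 3 \<Longrightarrow> cyclic_part xs ys zs i = cyclic_part xs ys zs j"
  by (simp add: cyclic_part_def)

lemma cyclic_part_cases: "cyclic_part xs ys zs i \<in> {xs, ys, zs}"
proof -
  have "i mod 3 = 0 \<or> i mod 3 = 1 \<or> i mod 3 = 2"
    by linarith
  then show ?thesis
    by (auto simp: cyclic_part_def)
qed

lemma complete_on_cyclic_part:
  assumes "complete_on E (set xs) (set ys) (set zs)"
  shows "complete_on E (set (cyclic_part xs ys zs i)) (set (cyclic_part xs ys zs (Suc i)))
    (set (cyclic_part xs ys zs (Suc (Suc i))))"
proof (induction i)
  case 0
  then show ?case
    using assms by (simp add: cyclic_part_def)
next
  case (Suc i)
  moreover have "cyclic_part xs ys zs (Suc (Suc (Suc i))) = cyclic_part xs ys zs i"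
    by (rule cyclic_part_mod_eq) simp
  ultimately show ?case
    using complete_on_rotate by metis
qed

lemma cyclic_part_separated:
  assumes edges: "\<forall>e\<in>E. card e = 3"
    and complete: "complete_on E (set xs) (set ys) (set zs)"
    and nonempty: "xs \<noteq> []" "ys \<noteq> []" "zs \<noteq> []"
    and "x \<in> set (cyclic_part xs ys zs i)" "y \<in> set (cyclic_part xs ys zs (Suc i))"
  shows "x \<noteq> y"
proof
  assume "x = y"
  have "set (cyclic_part xs ys zs (Suc (Suc i))) \<noteq> {}"
    using cyclic_part_cases[of xs ys zs "Suc (Suc i)"] nonempty by auto
  then obtain z where "z \<in> set (cyclic_part xs ys zs (Suc (Suc i)))"
    by (meson ex_in_conv)
  then have "{x, y, z} \<in> E"
    using complete_on_cyclic_part[OF complete, of i] assms(6,7) unfolding complete_on_def by blast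
  then show False
    using edges \<open>x = y\<close> by (cases "x = z") auto
qed

text \<open>Vertex i of the tight cycle goes to entry i div 3 of part i mod 3; as 3 divides the
length of the cycle, consecutive vertices of the cycle land in cyclically consecutive parts.\<close>
lemma inj_on_cyclic_part_nth:
  assumes edges: "\<forall>e\<in>E. card e = 3"
    and complete: "complete_on E (set xs) (set ys) (set zs)"
    and length: "length xs = k" "length ys = k" "length zs = k"
    and distinct: "distinct xs" "distinct ys" "distinct zs"
  shows "inj_on (\<lambda>i. cyclic_part xs ys zs i ! (i div 3)) {..<3 * k}"
proof (rule inj_onI)
  let ?part = "cyclic_part xs ys zs"
  fix i j
  assume i: "i \<in> {..<3 * k}" and j: "j \<in> {..<3 * k}" and eq: "?part i ! (i div 3) = ?part j ! (j div 3)"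
  have part: "length (?part m) = k" "distinct (?part m)" for m
    using cyclic_part_cases[of xs ys zs m] length distinct by auto
  have in_part: "?part m ! (m div 3) \<in> set (?part m)" if "m \<in> {..<3 * k}" for m
    using that part(1)[of m] by simp
  show "i = j"
  proof (cases "i mod 3 = j mod 3")
    case True
    have "i div 3 < k" "j div 3 < k"
      using i j by auto
    then have "i div 3 = j div 3"
      using eq cyclic_part_mod_eq[OF True, of xs ys zs] part[of j] by (simp add: nth_eq_iff_index_eq)
    then show ?thesis
      using True div_mult_mod_eq[of i 3] div_mult_mod_eq[of j 3] by linarith
  next
    case False
    have nonempty: "xs \<noteq> []" "ys \<noteq> []" "zs \<noteq> []"
      using length i by auto
    note separated = cyclic_part_separated[OF edges complete nonempty]
    from False have "Suc i mod 3 = j mod 3 \<or> Suc j mod 3 = i mod 3"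
      by (simp add: mod_Suc) linarith
    then show ?thesis
    proof
      assume "Suc i mod 3 = j mod 3"
      then have mem: "?part j ! (j div 3) \<in> set (?part (Suc i))"
        using in_part[OF j] cyclic_part_mod_eq[of "Suc i" j xs ys zs] by simp
      show ?thesis
        using separated[OF in_part[OF i] mem] eq by simp
    next
      assume "Suc j mod 3 = i mod 3"
      then have mem: "?part i ! (i div 3) \<in> set (?part (Suc j))"
        using in_part[OF i] cyclic_part_mod_eq[of "Suc j" i xs ys zs] by simp
      show ?thesis
        using separated[OF in_part[OF j] mem] eq by simp
    qed
  qed
qed

lemma contains_tight_cycle_if_complete_tuples:
  fixes E :: "nat set set"
  assumes edges: "\<forall>e\<in>E. card e = 3"
    and tuples: "xs \<in> tuples k V" "ys \<in> tuples k V" "zs \<in> tuples k V"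
    and distinct: "distinct xs" "distinct ys" "distinct zs"
    and complete: "complete_on E (set xs) (set ys) (set zs)"
  shows "contains_copy V E {..<3 * k} (tight_cycle_edges (3 * k))"
proof -
  let ?part = "cyclic_part xs ys zs"
  define f where "f i = ?part i ! (i div 3)" for i
  have part: "?part m \<in> tuples k V" for m
    using cyclic_part_cases[of xs ys zs m] tuples by auto
  have f_in_part: "f m \<in> set (?part m)" if "m < 3 * k" for m
    using that part[of m] by (simp add: f_def tuples_def)
  have "inj_on f {..<3 * k}"
    unfolding f_def using tuples
    by (intro inj_on_cyclic_part_nth[OF edges complete _ _ _ distinct]) (simp_all add: tuples_def)
  moreover have "f ` {..<3 * k} \<subseteq> V"
    using f_in_part part by (force simp: tuples_def)
  moreover have "f ` e \<in> E" if "e \<in> tight_cycle_edges (3 * k)" for e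
  proof -
    obtain i where i: "i < 3 * k" and e: "e = {i, Suc i mod (3 * k), Suc (Suc i) mod (3 * k)}"
      using \<open>e \<in> tight_cycle_edges (3 * k)\<close> by (auto simp: tight_cycle_edges_def)
    have part_mod_cycle: "?part (m mod (3 * k)) = ?part m" for m
      by (rule cyclic_part_mod_eq) (simp add: mod_mod_cancel)
    have "Suc i mod (3 * k) < 3 * k" "Suc (Suc i) mod (3 * k) < 3 * k"
      using i by simp_all
    then have "f (Suc i mod (3 * k)) \<in> set (?part (Suc i))"
      "f (Suc (Suc i) mod (3 * k)) \<in> set (?part (Suc (Suc i)))"
      using f_in_part part_mod_cycle by metis+
    then show ?thesis
      using complete_on_cyclic_part[OF complete, of i] f_in_part[OF i]
      unfolding e complete_on_def by simp
  qed
  ultimately show ?thesis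
    unfolding contains_copy_def by blast
qed

definition turan_density_zero :: "nat set \<Rightarrow> nat set set \<Rightarrow> bool" where
  "turan_density_zero VF EF \<longleftrightarrow>
     (\<forall>d>0. \<exists>N. \<forall>n\<ge>N. \<forall>E. uniform3 {..<n} E \<and> d \<le> edge_density E {..<n} \<longrightarrow> contains_copy {..<n} E VF EF)"

lemma uniform_turan_density_eq_0_if_turan_density_zero:
  assumes "EF \<noteq> {}" "turan_density_zero VF EF"
  shows "uniform_turan_density VF EF = 0"
proof -
  define D where "D = {d. 0 \<le> d \<and> d \<le> 1 \<and> (\<forall>\<epsilon>>0. \<forall>N. \<exists>n\<ge>N. \<exists>E. uniform3 {..<n} E \<and>
    \<not> contains_copy {..<n} E VF EF \<and> linear_density_ge \<epsilon> {..<n} E d)}"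
  have "0 \<in> D"
  proof -
    have "\<not> contains_copy {..<n} {} VF EF" for n
      using assms(1) by (auto simp: contains_copy_def)
    then show ?thesis
      by (auto simp: D_def uniform3_def linear_density_ge_def edge_density_def)
  qed
  moreover have "d = 0" if "d \<in> D" for d
  proof (rule ccontr)
    assume "d \<noteq> 0"
    with that have "0 < d"
      by (simp add: D_def)
    then obtain N where N: "\<forall>n\<ge>N. \<forall>E. uniform3 {..<n} E \<and> d \<le> edge_density E {..<n} \<longrightarrow>
        contains_copy {..<n} E VF EF"
      using assms(2) unfolding turan_density_zero_def by blast
    from that obtain n E where "n \<ge> N" "uniform3 {..<n} E" "\<not> contains_copy {..<n} E VF EF"
      "linear_density_ge 1 {..<n} E d"
      unfolding D_def by force
    then show False
      using N by (auto simp: linear_density_ge_def)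
  qed
  ultimately have "D = {0}"
    by blast
  then show ?thesis
    by (simp add: uniform_turan_density_def D_def)
qed

lemma turan_density_zero_tight_cycle:
  assumes "0 < k"
  shows "turan_density_zero {..<3 * k} (tight_cycle_edges (3 * k))"
  unfolding turan_density_zero_def
proof (intro allI impI)
  fix d :: real
  assume "0 < d"
  define \<beta> where "\<beta> = (d / 27) ^ (k ^ 3)"
  have "0 < \<beta>"
    using \<open>0 < d\<close> by (simp add: \<beta>_def)
  show "\<exists>N. \<forall>n\<ge>N. \<forall>E. uniform3 {..<n} E \<and> d \<le> edge_density E {..<n} \<longrightarrow>
      contains_copy {..<n} E {..<3 * k} (tight_cycle_edges (3 * k))"
  proof (intro exI allI impI, elim conjE)
    fix n E
    assume n: "max 3 (nat \<lceil>3 * real k ^ 2 / \<beta>\<rceil> + 1) \<le> n"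
      and E: "uniform3 {..<n} E" and "d \<le> edge_density E {..<n}"
    have "3 \<le> n" "nat \<lceil>3 * real k ^ 2 / \<beta>\<rceil> + 1 \<le> n"
      using n by simp_all
    have "3 * real k ^ 2 / \<beta> < real n"
      using \<open>nat \<lceil>3 * real k ^ 2 / \<beta>\<rceil> + 1 \<le> n\<close> by linarith
    then have "3 * real k ^ 2 < real n * \<beta>"
      using \<open>0 < \<beta>\<close> by (simp add: field_simps)
    have "d / 27 \<le> tripartite_hom_density E {..<n} 1 1 1"
      using edge_density_le_tripartite_hom_density[OF E] \<open>3 \<le> n\<close> \<open>d \<le> edge_density E {..<n}\<close>
      by simp
    then have "\<beta> \<le> tripartite_hom_density E {..<n} 1 1 1 ^ (k ^ 3)"
      using \<open>0 < d\<close> unfolding \<beta>_def by (intro power_mono) auto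
    also have "\<dots> \<le> tripartite_hom_density E {..<n} k k k"
      using \<open>3 \<le> n\<close> by (intro tripartite_hom_density_ge_power) (auto simp: lessThan_empty_iff)
    finally have "3 * real k ^ 2 < card {..<n} * tripartite_hom_density E {..<n} k k k"
      using \<open>3 * real k ^ 2 < real n * \<beta>\<close> by (simp add: order_less_le_trans mult_left_mono)
    then obtain xs ys zs where
      tuples: "xs \<in> tuples k {..<n}" "ys \<in> tuples k {..<n}" "zs \<in> tuples k {..<n}"
      and distinct: "distinct xs" "distinct ys" "distinct zs"
      and complete: "complete_on E (set xs) (set ys) (set zs)"
      using exists_distinct_complete_tuples[of "{..<n}" k E] by auto
    have edges: "\<forall>e\<in>E. card e = 3"
      using E by (simp add: uniform3_def)
    show "contains_copy {..<n} E {..<3 * k} (tight_cycle_edges (3 * k))"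
      by (rule contains_tight_cycle_if_complete_tuples[OF edges tuples distinct complete])
  qed
qed

theorem proposition2p2:
  fixes l :: nat
  assumes "l \<ge> 5" and "3 dvd l"
  shows "uniform_turan_density {..<l} (tight_cycle_edges l) = 0"
proof -
  obtain k where "l = 3 * k"
    using assms(2) by blast
  with assms(1) have "0 < k"
    by simp
  have "{0, 1, 2} \<in> tight_cycle_edges l"
    using assms(1) unfolding tight_cycle_edges_def by (auto intro!: exI[of _ 0])
  then have "tight_cycle_edges l \<noteq> {}"
    by blast
  then show ?thesis
    using uniform_turan_density_eq_0_if_turan_density_zero turan_density_zero_tight_cycle[OF \<open>0 < k\<close>]
    unfolding \<open>l = 3 * k\<close> by simp
qed

end
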